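(* Consider the oceanic model with threshold $h>0$ under the Shapley value reward sharing scheme. Fix $\varepsilon>0$ and atomic players $1,\dots,n$ whose stakes all satisfy $a_i\in(h/4,h)$. Then there exists $L_0$ (depending on $\varepsilon$ and on the total stake of the atomic players) such that whenever the total mass $L$ of non-atomic players satisfies $L\ge L_0$, the Price of Stability of the resulting game is at most $4/3+\varepsilon$.
   Context: Oceanic model: there is a finite set $N_a=\{1,\dots,n\}$ of atomic players, player $i$ having stake $a_i>0$, and a continuum $N_s$ of non-atomic players of total mass $L\ge 0$ (identified with $[0,L]$; a measurable set of non-atomic players contributes stake equal to its Lebesgue measure). A threshold $h>0$ is fixed and it is assumed that $a_i<h$ for every atomic player. Each player either opens her own pool or joins a pool opened by another player; the pools form a partition $\Pi$ of all players. For a pool $S$ let $m(S)=|S\cap N_s|+\sum_{i\in S\cap N_a}a_i$; its reward is $\rho(S)=1$ if $m(S)\ge h$ (a winning pool) and $\rho(S)=0$ otherwise. A reward sharing scheme splits $\rho(S)$ among the members of $S$: each atomic member receives a payment, and the remainder is shared equally per unit of stake among the non-atomic members. Utility = payment received. A partition $\Pi$ of all players into winning pools is a Nash equilibrium if no atomic player can strictly increase her payment by moving to another pool of $\Pi$ or opening a new pool alone, and no non-atomic player can strictly increase her reward per unit of stake by moving to another pool of $\Pi$ (a non-atomic player is infinitesimal, so her move does not change the per-unit reward of the pool she joins). $OPT(G)$ is the maximum number $t$ such that the players can be partitioned into $t$ pools each of stake at least $h$; for a partition $\Pi$, $W(\Pi)$ is its number of winning pools; the Price of Stability is $\min_{\Pi}OPT(G)/W(\Pi)$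 over all Nash equilibrium partitions $\Pi$. Shapley scheme (oceanic): in a pool $S$ with non-atomic mass $k>0$ and atomic members with stakes $b_1,\dots,b_t$, let $L_1,\dots,L_t$ be i.i.d. uniform on $[0,k]$ and $P(i)=\{j\ne i: L_j<L_i\}$; atomic member $i$ receives $\Pr\big[\sum_{j\in P(i)}b_j+L_i<h\le\sum_{j\in P(i)}b_j+L_i+b_i\big]$, and the remaining reward is shared equally per unit of stake among the non-atomic members. If $k=0$, atomic members receive the standard Shapley value $\phi_i(S)=\sum_{T\subseteq S\setminus\{i\}}\frac{|T|!(|S|-|T|-1)!}{|S|!}(\rho(T\cup\{i\})-\rho(T))$. *)

theory Defs
  imports "HOL-Probability.Probability"
begin

(* Atomic players are 1..n with stakes a i; the non-atomic
   players form a continuum of total mass L.  Since non-atomic players are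
   identical and only the Lebesgue measure of the set of non-atomic players in
   a pool matters, a pool is represented by a pair (A, k): the set A of its
   atomic members and the mass k >= 0 of its non-atomic members. *)

type_synonym pool = "nat set \<times> real"

definition stake :: "(nat \<Rightarrow> real) \<Rightarrow> pool \<Rightarrow> real" where
  "stake a P = snd P + (\<Sum>i\<in>fst P. a i)"

definition pool_reward :: "real \<Rightarrow> (nat \<Rightarrow> real) \<Rightarrow> pool \<Rightarrow> real" where
  "pool_reward h a P = (if stake a P \<ge> h then 1 else 0)"

definition winning :: "real \<Rightarrow> (nat \<Rightarrow> real) \<Rightarrow> pool \<Rightarrow> bool" where
  "winning h a P \<longleftrightarrow> stake a P \<ge> h"

definition is_partition :: "nat \<Rightarrow> real \<Rightarrow> pool list \<Rightarrow> bool" where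
  "is_partition n L Ps \<longleftrightarrow>
     (\<forall>j<length Ps. fst (Ps!j) \<subseteq> {1..n} \<and> snd (Ps!j) \<ge> 0 \<and>
                      (fst (Ps!j) \<noteq> {} \<or> snd (Ps!j) > 0)) \<and>
     (\<forall>i<length Ps. \<forall>j<length Ps. i \<noteq> j \<longrightarrow> fst (Ps!i) \<inter> fst (Ps!j) = {}) \<and>
     (\<Union>j<length Ps. fst (Ps!j)) = {1..n} \<and>
     (\<Sum>j<length Ps. snd (Ps!j)) = L"

definition rho_atomic :: "real \<Rightarrow> (nat \<Rightarrow> real) \<Rightarrow> nat set \<Rightarrow> real" where
  "rho_atomic h a T = (if (\<Sum>j\<in>T. a j) \<ge> h then 1 else 0)"

definition std_shapley :: "real \<Rightarrow> (nat \<Rightarrow> real) \<Rightarrow> nat set \<Rightarrow> nat \<Rightarrow> real" where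
  "std_shapley h a A i =
     (\<Sum>T\<in>Pow (A - {i}). fact (card T) * fact (card A - card T - 1) / fact (card A)
          * (rho_atomic h a (T \<union> {i}) - rho_atomic h a T))"

definition unif_positions :: "nat set \<Rightarrow> real \<Rightarrow> (nat \<Rightarrow> real) measure" where
  "unif_positions A k = PiM A (\<lambda>_. uniform_measure lborel {0..k})"

definition ocean_shapley :: "real \<Rightarrow> (nat \<Rightarrow> real) \<Rightarrow> pool \<Rightarrow> nat \<Rightarrow> real" where
  "ocean_shapley h a P i =
     (if snd P > 0 then
        measure (unif_positions (fst P) (snd P))
          {x \<in> space (unif_positions (fst P) (snd P)).
             (\<Sum>j\<in>{j\<in>fst P - {i}. x j < x i}. a j) + x i < h \<and>
             h \<le> (\<Sum>j\<in>{j\<in>fst P - {i}. x j < x i}. a j) + x i + a i}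
      else std_shapley h a (fst P) i)"

(* reward per unit of stake of the non-atomic members of pool P
   (the remainder after paying the atomic members, divided by the mass;
    for a pool without non-atomic mass this is 0 by the convention x/0 = 0) *)
definition nonatomic_unit :: "real \<Rightarrow> (nat \<Rightarrow> real) \<Rightarrow> pool \<Rightarrow> real" where
  "nonatomic_unit h a P =
     (pool_reward h a P - (\<Sum>i\<in>fst P. ocean_shapley h a P i)) / snd P"

definition shapley_NE :: "real \<Rightarrow> nat \<Rightarrow> (nat \<Rightarrow> real) \<Rightarrow> real \<Rightarrow> pool list \<Rightarrow> bool" where
  "shapley_NE h n a L Ps \<longleftrightarrow>
     is_partition n L Ps \<and>
     (\<forall>p<length Ps. winning h a (Ps!p)) \<and>
     (\<forall>p<length Ps. \<forall>i\<in>fst (Ps!p).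
        (\<forall>q<length Ps. q \<noteq> p \<longrightarrow>
           ocean_shapley h a (insert i (fst (Ps!q)), snd (Ps!q)) i \<le> ocean_shapley h a (Ps!p) i) \<and>
        ocean_shapley h a ({i}, 0) i \<le> ocean_shapley h a (Ps!p) i) \<and>
     (\<forall>p<length Ps. snd (Ps!p) > 0 \<longrightarrow>
        (\<forall>q<length Ps. q \<noteq> p \<longrightarrow> nonatomic_unit h a (Ps!q) \<le> nonatomic_unit h a (Ps!p)))"

definition OPT :: "real \<Rightarrow> nat \<Rightarrow> (nat \<Rightarrow> real) \<Rightarrow> real \<Rightarrow> nat" where
  "OPT h n a L = Max {t. \<exists>Ps. is_partition n L Ps \<and> length Ps = t \<and> (\<forall>P\<in>set Ps. stake a P \<ge> h)}"

definition num_winning :: "real \<Rightarrow> (nat \<Rightarrow> real) \<Rightarrow> pool list \<Rightarrow> nat" where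
  "num_winning h a Ps = length (filter (winning h a) Ps)"

definition price_of_stability :: "real \<Rightarrow> nat \<Rightarrow> (nat \<Rightarrow> real) \<Rightarrow> real \<Rightarrow> real" where
  "price_of_stability h n a L =
     Inf {real (OPT h n a L) / real (num_winning h a Ps) | Ps. shapley_NE h n a L Ps}"

end

theory Submission
  imports Defs
begin

(* Normalise stakes by h. For a ratio m, let every atomic player sit alone with the non-atomic
   mass h * balanced_mass m (a_i / h), chosen so that the non-atomic members of that pool earn
   exactly 1/(h m) per unit, and put the remaining non-atomic mass into pools of mass h m, which
   pay the same rate. No non-atomic player can then improve. Computing the oceanic Shapley value
   of pools with one or two atomic players shows that, for 4/3 <= m <= 27/20, no atomic player
   gains by joining another pool or leaving. Every pool has stake at most h m, so OPT <= m W.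
   The non-atomic mass used is continuous in m, so for large L the intermediate value theorem
   gives an m in [4/3, 4/3 + eps] and a number of purely non-atomic pools using exactly L; since
   each a_i > h/4, there are fewer than 4 S / h atomic players, which makes L0 depend on S only. *)

section \<open>Balanced non-atomic mass\<close>

(* In normalised units an atomic player of stake x alone with non-atomic mass k is paid
   (min 1 k - (1 - x)) / k, so the non-atomic members earn 1/m per unit iff
   k^2 = m (max k 1 - x); balanced_mass m x is the positive root. *)
definition balanced_mass :: "real \<Rightarrow> real \<Rightarrow> real" where
  "balanced_mass m x =
     (if m * (1 - x) \<le> 1 then sqrt (m * (1 - x)) else (m + sqrt (m\<^sup>2 - 4 * m * x)) / 2)"

lemma balanced_mass_cases [consumes 3, case_names small large]:
  assumes m: "1 \<le> m" and x: "0 < x" "x < 1"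
  obtains (small) "m * (1 - x) \<le> 1" "0 < balanced_mass m x" "balanced_mass m x \<le> 1"
      "(balanced_mass m x)\<^sup>2 = m * (1 - x)"
    | (large) "1 < m * (1 - x)" "1 < balanced_mass m x"
      "(balanced_mass m x)\<^sup>2 = m * (balanced_mass m x - x)"
proof (cases "m * (1 - x) \<le> 1")
  case True
  then have "balanced_mass m x = sqrt (m * (1 - x))" by (simp add: balanced_mass_def)
  with True m x show ?thesis by (intro small) auto
next
  case False
  define k where "k = balanced_mass m x"
  have k: "k = (m + sqrt (m\<^sup>2 - 4 * m * x)) / 2"
    using False by (simp add: k_def balanced_mass_def)
  have disc: "(2 - m)\<^sup>2 < m\<^sup>2 - 4 * m * x"
    using False by (simp add: power2_eq_square algebra_simps)
  then have "2 - m < sqrt (m\<^sup>2 - 4 * m * x)" by (rule real_less_rsqrt)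
  then have "1 < k" by (simp add: k)
  moreover have "k\<^sup>2 = m * (k - x)"
  proof -
    have "0 \<le> m\<^sup>2 - 4 * m * x" using disc zero_le_power2[of "2 - m"] by linarith
    then have "(sqrt (m\<^sup>2 - 4 * m * x))\<^sup>2 = m\<^sup>2 - 4 * m * x" by simp
    then show ?thesis by (simp add: k power2_eq_square field_simps)
  qed
  ultimately show ?thesis using False by (intro large) (auto simp: k_def)
qed

lemma balanced_mass_pos: "1 \<le> m \<Longrightarrow> 0 < x \<Longrightarrow> x < 1 \<Longrightarrow> 0 < balanced_mass m x"
  by (cases rule: balanced_mass_cases) auto

lemma balanced_mass_eq_sqrt: "m * (1 - x) \<le> 1 \<Longrightarrow> balanced_mass m x = sqrt (m * (1 - x))"
  by (simp add: balanced_mass_def)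

lemma balanced_mass_div_eq_sqrt:
  assumes "0 < m" "m * (1 - x) \<le> 1"
  shows "balanced_mass m x / m = sqrt ((1 - x) / m)"
proof -
  have "sqrt ((1 - x) / m) = sqrt (m * (1 - x) / m\<^sup>2)"
    using assms by (simp add: power2_eq_square)
  also have "\<dots> = sqrt (m * (1 - x)) / m"
    using assms by (simp add: real_sqrt_divide)
  finally show ?thesis using assms by (simp add: balanced_mass_eq_sqrt)
qed

lemma one_le_balanced_mass_add:
  assumes "1 \<le> m" "0 < x" "x < 1"
  shows "1 \<le> balanced_mass m x + x"
  using assms
proof (cases rule: balanced_mass_cases)
  case small
  have "(1 - x)\<^sup>2 \<le> m * (1 - x)"
    using assms by (simp add: power2_eq_square mult_right_mono)
  then have "(1 - x)\<^sup>2 \<le> (balanced_mass m x)\<^sup>2" using small(4) by simp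
  then have "1 - x \<le> balanced_mass m x" using power2_le_imp_le less_imp_le[OF small(2)] by blast
  then show ?thesis by simp
qed (use assms in auto)

lemma balanced_mass_add_le:
  assumes m: "4/3 \<le> m" and x: "0 < x" "x < 1"
  shows "balanced_mass m x + x \<le> m"
proof -
  define k where "k = balanced_mass m x"
  have "1 \<le> m" using m by simp
  from this x show ?thesis
  proof (cases rule: balanced_mass_cases)
    case small
    have "x = 1 - k\<^sup>2 / m" using small(4) m by (simp add: k_def field_simps)
    moreover have "k + (1 - k\<^sup>2 / m) \<le> m"
    proof -
      have "0 \<le> (k - m / 2)\<^sup>2 + (3 * m / 4 - 1) * m" using m by simp
      then show ?thesis using m by (simp add: field_simps power2_eq_square)
    qed
    ultimately show ?thesis using k_def by linarith
  next
    case large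
    have "x = k - k\<^sup>2 / m" using large(3) m by (simp add: k_def field_simps)
    moreover have "k + (k - k\<^sup>2 / m) \<le> m"
    proof -
      have "0 \<le> (m - k)\<^sup>2" by simp
      then show ?thesis using m by (simp add: field_simps power2_eq_square)
    qed
    ultimately show ?thesis using k_def by linarith
  qed
qed

lemma continuous_on_balanced_mass: "continuous_on {..2} (\<lambda>m. balanced_mass m x)"
proof -
  define S1 where "S1 = {..2} \<inter> {m::real. m * (1 - x) \<le> 1}"
  define S2 where "S2 = {..2} \<inter> {m::real. 1 \<le> m * (1 - x)}"
  have "closed S1" "closed S2" unfolding S1_def S2_def
    by (intro closed_Int closed_atMost closed_Collect_le continuous_intros)+
  then have "continuous_on (S1 \<union> S2) (\<lambda>m. balanced_mass m x)"
    unfolding balanced_mass_def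
  proof (rule continuous_on_cases)
    show "\<forall>m. m \<in> S1 \<and> \<not> m * (1 - x) \<le> 1 \<or> m \<in> S2 \<and> m * (1 - x) \<le> 1 \<longrightarrow>
        sqrt (m * (1 - x)) = (m + sqrt (m\<^sup>2 - 4 * m * x)) / 2"
    proof (intro allI impI)
      fix m assume "m \<in> S1 \<and> \<not> m * (1 - x) \<le> 1 \<or> m \<in> S2 \<and> m * (1 - x) \<le> 1"
      then have "m * (1 - x) = 1" "m \<le> 2" unfolding S1_def S2_def by auto
      moreover from this have "m\<^sup>2 - 4 * m * x = (2 - m)\<^sup>2"
        by (simp add: power2_eq_square algebra_simps)
      ultimately show "sqrt (m * (1 - x)) = (m + sqrt (m\<^sup>2 - 4 * m * x)) / 2" by simp
    qed
  qed (intro continuous_intros; simp)+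
  moreover have "S1 \<union> S2 = {..2}" unfolding S1_def S2_def by auto
  ultimately show ?thesis by simp
qed

section \<open>Oceanic Shapley values with one or two atomic players\<close>

abbreviation unif :: "real \<Rightarrow> real measure" where
  "unif k \<equiv> uniform_measure lborel {0..k}"

lemma prob_space_unif: "0 < k \<Longrightarrow> prob_space (unif k)"
  by (intro prob_space_uniform_measure) auto

lemma product_sigma_finite_unif: "0 < k \<Longrightarrow> product_sigma_finite (\<lambda>_. unif k)"
  unfolding product_sigma_finite_def using prob_space_unif prob_space_imp_sigma_finite by blast

lemma measure_unif: "0 < k \<Longrightarrow> B \<in> sets borel \<Longrightarrow> measure (unif k) B = measure lborel ({0..k} \<inter> B) / k"
  by (subst measure_uniform_measure) auto

lemma ocean_shapley_singleton:
  assumes k: "0 < k"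
  shows "ocean_shapley h a ({i}, k) i = measure (unif k) {y. y < h \<and> h \<le> y + a i}"
proof -
  interpret product_sigma_finite "\<lambda>_. unif k" using product_sigma_finite_unif[OF k] .
  define B where "B = {y::real. y < h \<and> h \<le> y + a i}"
  have B: "B \<in> sets (unif k)" unfolding B_def by simp
  have "ocean_shapley h a ({i}, k) i =
      measure (PiM {i} (\<lambda>_. unif k)) ((\<lambda>x. x i) -` B \<inter> space (PiM {i} (\<lambda>_. unif k)))"
    using k by (simp add: ocean_shapley_def unif_positions_def B_def Int_def conj_commute)
  also have "\<dots> = measure (distr (PiM {i} (\<lambda>_. unif k)) (unif k) (\<lambda>x. x i)) B"
    using B by (subst measure_distr) (auto simp: measurable_component_singleton)
  also have "\<dots> = measure (unif k) B" by (simp only: distr_singleton)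
  finally show ?thesis unfolding B_def .
qed

lemma ocean_shapley_singleton_eq:
  assumes k: "0 < k" and a: "0 < a i" "a i < h" "h - a i \<le> k"
  shows "ocean_shapley h a ({i}, k) i = (min h k - (h - a i)) / k"
proof -
  have B: "{y::real. y < h \<and> h \<le> y + a i} \<in> sets borel" by measurable
  have "measure lborel ({0..k} \<inter> {y. y < h \<and> h \<le> y + a i}) = min h k - (h - a i)"
  proof (cases "k < h")
    case True
    then have "{0..k} \<inter> {y. y < h \<and> h \<le> y + a i} = {h - a i..k}" using a by auto
    then show ?thesis using True a by (simp add: measure_def)
  next
    case False
    then have "{0..k} \<inter> {y. y < h \<and> h \<le> y + a i} = {h - a i..<h}" using a by auto
    then show ?thesis using False a by (simp add: measure_def)
  qed
  then show ?thesis using ocean_shapley_singleton[OF k] measure_unif[OF k B] by simp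
qed

definition pivotal_in_pair :: "real \<Rightarrow> real \<Rightarrow> real \<Rightarrow> real \<Rightarrow> real \<Rightarrow> bool" where
  "pivotal_in_pair h ai aj u v \<longleftrightarrow>
     (if v < u then aj else 0) + u < h \<and> h \<le> (if v < u then aj else 0) + u + ai"

lemma measurable_pivotal_in_pair [measurable]:
  "Measurable.pred (borel \<Otimes>\<^sub>M borel) (\<lambda>(u, v). pivotal_in_pair h ai aj u v)"
  unfolding pivotal_in_pair_def by measurable

lemma sets_pivotal_section: "{v. pivotal_in_pair h ai aj u v} \<in> sets borel"
  using measurable_Pair2[OF measurable_pivotal_in_pair[of h ai aj], of u]
  by (simp add: measurable_cong_sets pred_def)

lemma ocean_shapley_pair:
  assumes "i \<noteq> j" "0 < k"
  shows "ocean_shapley h a ({i, j}, k) i =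
    measure (PiM {i, j} (\<lambda>_. unif k))
      {x \<in> space (PiM {i, j} (\<lambda>_. unif k)). pivotal_in_pair h (a i) (a j) (x i) (x j)}"
proof -
  have "{l \<in> {i, j} - {i}. x l < x i} = (if x j < x i then {j} else {})" for x :: "nat \<Rightarrow> real"
    using assms by auto
  then have "(\<Sum>l\<in>{l \<in> {i, j} - {i}. x l < x i}. a l) = (if x j < x i then a j else 0)"
    for x :: "nat \<Rightarrow> real"
    by simp
  then show ?thesis
    using assms by (simp add: ocean_shapley_def unif_positions_def pivotal_in_pair_def)
qed

lemma emeasure_pivotal_pair:
  assumes ij: "i \<noteq> j" and k: "0 < k"
  defines "M \<equiv> PiM {i, j} (\<lambda>_. unif k)"
  shows "emeasure M {x \<in> space M. pivotal_in_pair h ai aj (x i) (x j)}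
    = (\<integral>\<^sup>+ y. emeasure (unif k) {v. pivotal_in_pair h ai aj y v} \<partial>unif k)"
proof -
  interpret product_sigma_finite "\<lambda>_. unif k" using product_sigma_finite_unif[OF k] .
  define E where "E = {x \<in> space M. pivotal_in_pair h ai aj (x i) (x j)}"
  have "(\<lambda>x. (x i, x j)) \<in> measurable M (borel \<Otimes>\<^sub>M borel)"
    unfolding M_def by (intro measurable_Pair) (auto intro!: measurable_component_singleton)
  from measurable_compose[OF this measurable_pivotal_in_pair]
  have E: "E \<in> sets M" unfolding E_def pred_def by simp
  have section_sets: "{v. pivotal_in_pair h ai aj y v} \<in> sets (unif k)" for y
    using sets_pivotal_section by simp
  have "emeasure M E = (\<integral>\<^sup>+ x. indicator E x \<partial>M)"
    using E by simp
  also have "\<dots> = (\<integral>\<^sup>+ y. (\<integral>\<^sup>+ x. indicator E (x(i := y)) \<partial>PiM {j} (\<lambda>_. unif k)) \<partial>unif k)"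
    using ij E unfolding M_def by (subst product_nn_integral_insert_rev) auto
  also have "\<dots> = (\<integral>\<^sup>+ y. (\<integral>\<^sup>+ x. indicator {v. pivotal_in_pair h ai aj y v} (x j)
      \<partial>PiM {j} (\<lambda>_. unif k)) \<partial>unif k)"
  proof (intro nn_integral_cong)
    fix y x assume "x \<in> space (PiM {j} (\<lambda>_. unif k))"
    then have "x(i := y) \<in> space M"
      using ij by (auto simp: M_def space_PiM PiE_def extensional_def)
    then show "indicator E (x(i := y))
        = (indicator {v. pivotal_in_pair h ai aj y v} (x j) :: ennreal)"
      unfolding E_def using ij by (simp add: indicator_def)
  qed
  also have "\<dots> = (\<integral>\<^sup>+ y. emeasure (unif k) {v. pivotal_in_pair h ai aj y v} \<partial>unif k)"
    using section_sets by (simp add: product_nn_integral_singleton)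
  finally show ?thesis unfolding E_def .
qed

(* In a pool {i, j} with non-atomic mass k, player i at position y is pivotal ahead of j iff
   h - ai <= y < h and j comes later (probability (k - y)/k), and pivotal behind j iff
   h - ai - aj <= y < h - aj and j comes earlier (probability y/k). Up to endpoints, the pivot
   weight is k times this probability; the two areas are its integrals over the two ranges. *)
definition pivot_weight :: "real \<Rightarrow> real \<Rightarrow> real \<Rightarrow> real \<Rightarrow> real \<Rightarrow> real" where
  "pivot_weight h ai aj k y =
     indicator {h - ai..min h k} y * (k - y) + indicator {max 0 (h - ai - aj)..h - aj} y * y"

definition pivot_area_ahead :: "real \<Rightarrow> real \<Rightarrow> real \<Rightarrow> real" where
  "pivot_area_ahead h ai k =
     (if h - ai \<le> min h k then (min h k - (h - ai)) * (k - (min h k + (h - ai)) / 2) else 0)"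

definition pivot_area_behind :: "real \<Rightarrow> real \<Rightarrow> real \<Rightarrow> real" where
  "pivot_area_behind h ai aj = ((h - aj)\<^sup>2 - (max 0 (h - ai - aj))\<^sup>2) / 2"

lemma emeasure_pivotal_section:
  assumes k: "0 < k" and y: "0 \<le> y" "y \<le> k" "y \<noteq> h" "y \<noteq> h - aj"
  shows "emeasure (unif k) {v. pivotal_in_pair h ai aj y v}
    = ennreal (pivot_weight h ai aj k y / k)"
proof -
  define ahead behind where "ahead \<longleftrightarrow> y < h \<and> h \<le> y + ai"
    and "behind \<longleftrightarrow> aj + y < h \<and> h \<le> aj + y + ai"
  have weight: "pivot_weight h ai aj k y = (if behind then y else 0) + (if ahead then k - y else 0)"
    using y by (auto simp: pivot_weight_def ahead_def behind_def indicator_def)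
  have pivotal: "{0..k} \<inter> {v. pivotal_in_pair h ai aj y v} =
      (if behind then {0..<y} else {}) \<union> (if ahead then {y..k} else {})"
    using y by (auto simp: pivotal_in_pair_def ahead_def behind_def)
  have "measure lborel ({0..k} \<inter> {v. pivotal_in_pair h ai aj y v}) = pivot_weight h ai aj k y"
  proof -
    have "{0..<y} \<union> {y..k} = {0..k}" using y by auto
    then show ?thesis using y by (cases ahead; cases behind) (auto simp: pivotal weight measure_def)
  qed
  then have "measure (unif k) {v. pivotal_in_pair h ai aj y v} = pivot_weight h ai aj k y / k"
    using measure_unif[OF k sets_pivotal_section] by simp
  then show ?thesis
    using finite_measure.emeasure_eq_measure[OF prob_space.finite_measure[OF prob_space_unif[OF k]]]
    by simp
qed

lemma nn_integral_affine_on_interval: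
  fixes p q c0 c1 :: real
  assumes pq: "p \<le> q" and nonneg: "\<And>y. y \<in> {p..q} \<Longrightarrow> 0 \<le> c0 + c1 * y"
  shows "(\<integral>\<^sup>+ y. ennreal (indicator {p..q} y * (c0 + c1 * y)) \<partial>lborel)
    = ennreal (c0 * (q - p) + c1 * (q\<^sup>2 - p\<^sup>2) / 2)"
proof -
  have "((\<lambda>y. c0 + c1 * y) has_integral ((c0 * q + c1 * q\<^sup>2 / 2) - (c0 * p + c1 * p\<^sup>2 / 2))) {p..q}"
  proof (rule fundamental_theorem_of_calculus[OF pq])
    fix x :: real assume "x \<in> {p..q}"
    have "((\<lambda>y. c0 * y + c1 * y\<^sup>2 / 2) has_field_derivative (c0 + c1 * x)) (at x within {p..q})"
      by (auto intro!: derivative_eq_intros simp: power2_eq_square algebra_simps)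
    then show "((\<lambda>y. c0 * y + c1 * y\<^sup>2 / 2) has_vector_derivative (c0 + c1 * x))
        (at x within {p..q})"
      by (simp add: has_real_derivative_iff_has_vector_derivative)
  qed
  moreover have "(c0 * q + c1 * q\<^sup>2 / 2) - (c0 * p + c1 * p\<^sup>2 / 2)
      = c0 * (q - p) + c1 * (q\<^sup>2 - p\<^sup>2) / 2"
    by (simp add: field_simps)
  ultimately have "((\<lambda>y. c0 + c1 * y) has_integral (c0 * (q - p) + c1 * (q\<^sup>2 - p\<^sup>2) / 2)) {p..q}"
    by simp
  from nn_integral_has_integral_lebesgue[OF nonneg this] show ?thesis .
qed

lemma pivot_area_ahead_nonneg: "0 \<le> pivot_area_ahead h ai k"
proof (cases "h - ai \<le> min h k")
  case True
  then have "0 \<le> min h k - (h - ai)" "0 \<le> k - (min h k + (h - ai)) / 2" by auto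
  then show ?thesis by (simp add: pivot_area_ahead_def)
next
  case False
  then show ?thesis unfolding pivot_area_ahead_def by (simp only: if_not_P[OF False]) simp
qed

lemma pivot_area_behind_nonneg: "0 < ai \<Longrightarrow> aj < h \<Longrightarrow> 0 \<le> pivot_area_behind h ai aj"
  by (auto simp: pivot_area_behind_def max_def intro: power_mono)

lemma nn_integral_pivot_weight:
  assumes k: "0 < k" and ai: "0 < ai" and aj: "aj < h"
  shows "(\<integral>\<^sup>+ y. ennreal (pivot_weight h ai aj k y / k) \<partial>lborel)
    = ennreal ((pivot_area_ahead h ai k + pivot_area_behind h ai aj) / k)"
proof -
  define S1 S2 where "S1 = {h - ai..min h k}" and "S2 = {max 0 (h - ai - aj)..h - aj}"
  have weight: "pivot_weight h ai aj k y / k =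
      indicator S1 y * (1 + (-1 / k) * y) + indicator S2 y * (0 + (1 / k) * y)" for y
    using k by (simp add: pivot_weight_def S1_def S2_def field_simps)
  have ahead: "(\<integral>\<^sup>+ y. ennreal (indicator S1 y * (1 + (-1 / k) * y)) \<partial>lborel)
      = ennreal (pivot_area_ahead h ai k / k)"
  proof (cases "h - ai \<le> min h k")
    case True
    then show ?thesis
      unfolding S1_def using k
      by (subst nn_integral_affine_on_interval)
        (auto simp: pivot_area_ahead_def field_simps power2_eq_square)
  next
    case False
    then have "S1 = {}" by (auto simp: S1_def)
    then show ?thesis unfolding pivot_area_ahead_def by (simp only: if_not_P[OF False]) simp
  qed
  have behind: "(\<integral>\<^sup>+ y. ennreal (indicator S2 y * (0 + (1 / k) * y)) \<partial>lborel)
      = ennreal (pivot_area_behind h ai aj / k)"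
    unfolding S2_def using k ai aj
    by (subst nn_integral_affine_on_interval) (auto simp: pivot_area_behind_def)
  have "(\<integral>\<^sup>+ y. ennreal (pivot_weight h ai aj k y / k) \<partial>lborel)
      = (\<integral>\<^sup>+ y. ennreal (indicator S1 y * (1 + (-1 / k) * y))
          + ennreal (indicator S2 y * (0 + (1 / k) * y)) \<partial>lborel)"
    unfolding weight using k
    by (intro nn_integral_cong ennreal_plus) (auto simp: S1_def S2_def indicator_def field_simps)
  also have "\<dots> = ennreal (pivot_area_ahead h ai k / k) + ennreal (pivot_area_behind h ai aj / k)"
    unfolding ahead[symmetric] behind[symmetric] S1_def S2_def by (rule nn_integral_add) auto
  also have "\<dots> = ennreal ((pivot_area_ahead h ai k + pivot_area_behind h ai aj) / k)"
    using k pivot_area_ahead_nonneg pivot_area_behind_nonneg[OF ai aj]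
    by (simp add: add_divide_distrib)
  finally show ?thesis .
qed

lemma nn_integral_pivotal_sections:
  assumes k: "0 < k" and ai: "0 < ai" "ai < h" and aj: "aj < h" "h - aj \<le> k"
  shows "(\<integral>\<^sup>+ y. emeasure (unif k) {v. pivotal_in_pair h ai aj y v} \<partial>unif k)
    = ennreal ((pivot_area_ahead h ai k + pivot_area_behind h ai aj) / k\<^sup>2)"
proof -
  have [measurable]: "(\<lambda>y. ennreal (pivot_weight h ai aj k y / k)) \<in> borel_measurable borel"
    unfolding pivot_weight_def by measurable
  have "AE y in lborel. y \<in> {0..k} \<longrightarrow>
      emeasure (unif k) {v. pivotal_in_pair h ai aj y v} = ennreal (pivot_weight h ai aj k y / k)"
    using AE_lborel_singleton[of h] AE_lborel_singleton[of "h - aj"]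
    by eventually_elim
      (auto simp del: emeasure_uniform_measure intro: emeasure_pivotal_section[OF k])
  then have "(\<integral>\<^sup>+ y. emeasure (unif k) {v. pivotal_in_pair h ai aj y v} \<partial>unif k)
      = (\<integral>\<^sup>+ y. ennreal (pivot_weight h ai aj k y / k) \<partial>unif k)"
    by (intro nn_integral_cong_AE AE_uniform_measureI) auto
  also have "\<dots>
      = (\<integral>\<^sup>+ y. ennreal (pivot_weight h ai aj k y / k) * indicator {0..k} y \<partial>lborel) / ennreal k"
    using k by (subst nn_integral_uniform_measure) auto
  also have "(\<integral>\<^sup>+ y. ennreal (pivot_weight h ai aj k y / k) * indicator {0..k} y \<partial>lborel)
      = (\<integral>\<^sup>+ y. ennreal (pivot_weight h ai aj k y / k) \<partial>lborel)"
    using ai aj by (intro nn_integral_cong) (auto simp: pivot_weight_def indicator_def)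
  also have "\<dots> = ennreal ((pivot_area_ahead h ai k + pivot_area_behind h ai aj) / k)"
    using k ai aj by (intro nn_integral_pivot_weight) auto
  also have "\<dots> / ennreal k = ennreal ((pivot_area_ahead h ai k + pivot_area_behind h ai aj) / k\<^sup>2)"
    using k pivot_area_ahead_nonneg pivot_area_behind_nonneg[of ai aj h] ai aj
    by (subst divide_ennreal) (auto simp: power2_eq_square)
  finally show ?thesis .
qed

lemma ocean_shapley_pair_eq:
  assumes ij: "i \<noteq> j" and k: "0 < k" and ai: "0 < a i" "a i < h" and aj: "a j < h" "h - a j \<le> k"
  shows "ocean_shapley h a ({i, j}, k) i
    = (pivot_area_ahead h (a i) k + pivot_area_behind h (a i) (a j)) / k\<^sup>2"
proof -
  have "0 \<le> (pivot_area_ahead h (a i) k + pivot_area_behind h (a i) (a j)) / k\<^sup>2"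
    using pivot_area_ahead_nonneg pivot_area_behind_nonneg[of "a i" "a j" h] ai aj by simp
  then show ?thesis
    using emeasure_pivotal_pair[OF ij k] nn_integral_pivotal_sections[OF k ai aj]
    by (simp add: ocean_shapley_pair[OF ij k] measure_def)
qed

section \<open>Payments in balanced pools\<close>

lemma pivot_area_ahead_scale:
  assumes "0 < h"
  shows "pivot_area_ahead h (h * x) (h * k) = h\<^sup>2 * pivot_area_ahead 1 x k"
proof -
  have min: "min h (h * k) = h * min 1 k" and diff: "h - h * x = h * (1 - x)"
    using assms by (simp_all add: min_def algebra_simps)
  have "(h * (1 - x) \<le> h * min 1 k) \<longleftrightarrow> (1 - x \<le> min 1 k)" using assms by simp
  then show ?thesis
    unfolding pivot_area_ahead_def min diff by (simp add: power2_eq_square algebra_simps)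
qed

lemma pivot_area_behind_scale:
  assumes "0 < h"
  shows "pivot_area_behind h (h * x) (h * y) = h\<^sup>2 * pivot_area_behind 1 x y"
proof -
  have "h - h * x - h * y = h * (1 - x - y)" by (simp add: algebra_simps)
  then have "max 0 (h - h * x - h * y) = h * max 0 (1 - x - y)"
    using assms by (simp add: max_def zero_le_mult_iff)
  then show ?thesis
    unfolding pivot_area_behind_def by (simp add: power2_eq_square algebra_simps)
qed

lemma ocean_shapley_alone: "0 < h \<Longrightarrow> a i < h \<Longrightarrow> ocean_shapley h a ({i}, 0) i = 0"
  by (simp add: ocean_shapley_def std_shapley_def rho_atomic_def)

lemma ocean_shapley_balanced_own:
  assumes h: "0 < h" and m: "1 \<le> m" and ai: "0 < a i" "a i < h"
  shows "ocean_shapley h a ({i}, h * balanced_mass m (a i / h)) i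
    = 1 - balanced_mass m (a i / h) / m"
proof -
  define x c where "x = a i / h" and "c = balanced_mass m x"
  have x: "0 < x" "x < 1" using ai h by (simp_all add: x_def field_simps)
  have c: "0 < c" "1 \<le> c + x"
    using balanced_mass_pos[OF m x] one_le_balanced_mass_add[OF m x] by (simp_all add: c_def)
  have ai_eq: "a i = h * x" using h by (simp add: x_def)
  have "h \<le> h * (c + x)" using mult_left_mono[OF c(2), of h] h by simp
  then have "ocean_shapley h a ({i}, h * c) i = (min h (h * c) - (h - a i)) / (h * c)"
    using c h ai by (intro ocean_shapley_singleton_eq) (auto simp: ai_eq algebra_simps)
  also have "\<dots> = (min 1 c - (1 - x)) / c"
    using h c by (simp add: ai_eq min_def field_simps)
  also have "\<dots> = 1 - c / m"
    using m x c(1) less_le_trans[OF zero_less_one m]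
    by (cases rule: balanced_mass_cases) (simp_all add: c_def min_def field_simps power2_eq_square)
  finally show ?thesis by (simp add: c_def x_def)
qed

lemma ocean_shapley_nonatomic_pool:
  assumes h: "0 < h" and m: "1 \<le> m" and ai: "0 < a i" "a i < h"
  shows "ocean_shapley h a ({i}, h * m) i = a i / h / m"
proof -
  have hm: "h \<le> h * m" using h m by simp
  then have "h - a i \<le> h * m" using ai by linarith
  then have "ocean_shapley h a ({i}, h * m) i = (min h (h * m) - (h - a i)) / (h * m)"
    using h m ai by (intro ocean_shapley_singleton_eq) auto
  also have "min h (h * m) = h" using hm by simp
  finally show ?thesis by simp
qed

lemma ocean_shapley_balanced_pair:
  assumes h: "0 < h" and m: "1 \<le> m" and ij: "i \<noteq> j" and ai: "0 < a i" "a i < h"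
    and aj: "0 < a j" "a j < h"
  shows "ocean_shapley h a ({i, j}, h * balanced_mass m (a j / h)) i =
    (pivot_area_ahead 1 (a i / h) (balanced_mass m (a j / h))
      + pivot_area_behind 1 (a i / h) (a j / h)) / (balanced_mass m (a j / h))\<^sup>2"
proof -
  define x y c where "x = a i / h" and "y = a j / h" and "c = balanced_mass m y"
  have y: "0 < y" "y < 1" using aj h by (simp_all add: y_def field_simps)
  have c: "0 < c" "1 \<le> c + y"
    using balanced_mass_pos[OF m y] one_le_balanced_mass_add[OF m y] by (simp_all add: c_def)
  have ai_eq: "a i = h * x" and aj_eq: "a j = h * y" using h by (simp_all add: x_def y_def)
  have "h \<le> h * (c + y)" using mult_left_mono[OF c(2), of h] h by simp
  then have "ocean_shapley h a ({i, j}, h * c) i =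
      (pivot_area_ahead h (a i) (h * c) + pivot_area_behind h (a i) (a j)) / (h * c)\<^sup>2"
    using c h ai aj by (intro ocean_shapley_pair_eq ij) (auto simp: aj_eq algebra_simps)
  also have "\<dots> = (pivot_area_ahead 1 x c + pivot_area_behind 1 x y) / c\<^sup>2"
    using h c
    by (simp only: ai_eq aj_eq pivot_area_ahead_scale[OF h] pivot_area_behind_scale[OF h])
      (simp add: power_mult_distrib distrib_left[symmetric])
  finally show ?thesis by (simp add: c_def x_def y_def)
qed

section \<open>Joining another atomic player's pool does not pay\<close>

lemma pivot_quartic_bound:
  fixes y z :: real
  assumes y: "0 \<le> y" "y \<le> 1" and z: "0 \<le> z" "z\<^sup>2 \<le> 3/4" and yz: "z\<^sup>2 * (y\<^sup>2 + z\<^sup>2) \<le> 3/4"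
  shows "2 * y * z \<le> 1 + 2 * y\<^sup>2 - y^4 - z^4"
proof -
  have "z \<le> 867/1000"
  proof (rule ccontr)
    assume "\<not> z \<le> 867/1000"
    then have "(867/1000)\<^sup>2 < z\<^sup>2" by (intro power_strict_mono) auto
    then show False using z by (simp add: power2_eq_square)
  qed
  then have yz_le: "y * z \<le> 867/1000 * y"
    using mult_left_mono[of z "867/1000" y] y by (simp add: mult.commute)
  show ?thesis
  proof (cases "y \<le> 1/2")
    case True
    have "(z\<^sup>2)\<^sup>2 \<le> (3/4)\<^sup>2" using z by (intro power_mono) auto
    then have "z^4 \<le> 9/16" by (simp add: power4_eq_xxxx power2_eq_square)
    moreover have "y^4 \<le> y\<^sup>2 / 4"
      using True y mult_left_mono[of "y\<^sup>2" "1/4" "y\<^sup>2"] power_mono[of y "1/2" 2]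
      by (simp add: power4_eq_xxxx power2_eq_square)
    moreover have "1734/1000 * y \<le> 7/16 + 7/4 * y\<^sup>2"
    proof -
      have "0 \<le> 7/4 * (y - 4954/10000)\<^sup>2" by simp
      then show ?thesis using True y by (simp add: power2_eq_square algebra_simps)
    qed
    ultimately show ?thesis using yz_le by linarith
  next
    case False
    define d where "d = y - 1/2"
    have d: "0 \<le> d" "d \<le> 1/2" using False y by (auto simp: d_def)
    have "2 * d^3 \<le> d\<^sup>2" using d mult_right_mono[of d "1/2" "d\<^sup>2"]
      by (simp add: power2_eq_square power3_eq_cube)
    moreover have "d^4 \<le> d\<^sup>2 / 4" using d mult_mono[of d "1/2" d "1/2"]
        mult_right_mono[of "d * d" "1/4" "d\<^sup>2"]
      by (simp add: power2_eq_square power4_eq_xxxx)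
    moreover have "2 * y\<^sup>2 - y^4 - 3/4 + (1 - 867/1000 * y)\<^sup>2 =
        842225/100000000 + 517689/1000000 * d + 1251689/1000000 * d\<^sup>2 - 2 * d^3 - d^4"
      by (simp add: d_def power2_eq_square power3_eq_cube power4_eq_xxxx field_simps)
    ultimately have "0 \<le> 2 * y\<^sup>2 - y^4 - 3/4 + (1 - 867/1000 * y)\<^sup>2"
      using d zero_le_power2[of d] by linarith
    moreover have "(1 - 867/1000 * y)\<^sup>2 \<le> (1 - y * z)\<^sup>2"
      using yz_le y by (intro power_mono) auto
    moreover have "z^4 = z\<^sup>2 * (y\<^sup>2 + z\<^sup>2) - (y * z)\<^sup>2"
      by (simp add: power2_eq_square power4_eq_xxxx algebra_simps)
    ultimately show ?thesis using yz by (simp add: power2_eq_square algebra_simps)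
  qed
qed

lemma sqrt_mul_le_pivot_bound:
  fixes x r :: real
  assumes x: "0 \<le> x" "x \<le> 1" and r: "0 \<le> r" "r \<le> 3/4" and xr: "r * (x + r) \<le> 3/4"
  shows "sqrt (x * r) \<le> 1 - ((1 - x)\<^sup>2 + r\<^sup>2) / 2"
proof -
  define y z where "y = sqrt x" and "z = sqrt r"
  have y2: "y\<^sup>2 = x" and z2: "z\<^sup>2 = r" using x r by (simp_all add: y_def z_def)
  have "y^4 = x\<^sup>2" "z^4 = r\<^sup>2"
    unfolding y2[symmetric] z2[symmetric] by (simp_all add: power4_eq_xxxx power2_eq_square)
  then have "2 * (y * z) \<le> 1 + 2 * x - x\<^sup>2 - r\<^sup>2"
    using pivot_quartic_bound[of y z] x r xr by (simp add: y_def z_def y2 z2)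
  then have "sqrt (x * r) \<le> (1 + 2 * x - x\<^sup>2 - r\<^sup>2) / 2"
    by (simp add: y_def z_def real_sqrt_mult)
  also have "\<dots> = 1 - ((1 - x)\<^sup>2 + r\<^sup>2) / 2"
    by (simp add: power2_eq_square field_simps)
  finally show ?thesis .
qed

lemma overlap_payment_le_small_mass:
  assumes m: "4/3 \<le> m" "m \<le> 27/20" and a: "a < 1"
    and k: "0 < k" "k \<le> 1" "k\<^sup>2 = m * (1 - b)" and overlap: "1 - a < k" "1 - b \<le> a"
  shows "((k - (1 - a))\<^sup>2 + (1 - b)\<^sup>2) / (2 * k\<^sup>2) \<le> 1 - balanced_mass m a / m"
proof -
  have m0: "0 < m" using m by simp
  have b: "1 - b = k\<^sup>2 / m" using k m0 by (simp add: field_simps)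
  have "m * (1 - a) \<le> 1"
  proof (cases "k \<le> 7/10")
    case True
    have "m * (1 - a) \<le> m * k" using overlap m0 by simp
    also have "\<dots> \<le> 27/20 * (7/10)" using True m k by (intro mult_mono) auto
    finally show ?thesis by simp
  next
    case False
    have "(7/10)\<^sup>2 \<le> k\<^sup>2" using False by (intro power_mono) auto
    moreover have "m * (1 - a) \<le> m * (1 - k\<^sup>2 / m)" using overlap b m0 by (intro mult_left_mono) auto
    ultimately show ?thesis using m m0 by (simp add: field_simps power2_eq_square)
  qed
  then have "balanced_mass m a / m = sqrt ((1 - a) / k * (k / m))"
    using balanced_mass_div_eq_sqrt[OF m0] k by simp
  also have "\<dots> \<le> 1 - ((1 - (1 - a) / k)\<^sup>2 + (k / m)\<^sup>2) / 2"
  proof (rule sqrt_mul_le_pivot_bound)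
    have "k / m * ((1 - a) / k + k / m) = ((1 - a) + (1 - b)) / m"
      using k m0 by (simp add: b field_simps power2_eq_square)
    also have "\<dots> \<le> 3/4" using overlap m m0 by (simp add: field_simps)
    finally show "k / m * ((1 - a) / k + k / m) \<le> 3/4" .
  qed (use a k m overlap in \<open>auto simp: field_simps\<close>)
  also have "((1 - (1 - a) / k)\<^sup>2 + (k / m)\<^sup>2) / 2 = ((k - (1 - a))\<^sup>2 + (1 - b)\<^sup>2) / (2 * k\<^sup>2)"
    using k m0 by (simp add: b field_simps power2_eq_square)
  finally show ?thesis by simp
qed

lemma own_payment_ge_large_stake:
  assumes m: "4/3 \<le> m" "m \<le> 27/20" and a: "1 / m \<le> a" "a < 1"
  shows "a / m + (a - 1 / m)\<^sup>2 / 2 \<le> 1 - balanced_mass m a / m"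
proof -
  define d where "d = a - 1 / m"
  have m0: "0 < m" using m by simp
  have mm: "m * m \<le> 2" using m mult_mono[of m "27/20" m "27/20"] by simp
  have "m * (1 - a) \<le> m * (1 - 1 / m)" using a m0 by (intro mult_left_mono) auto
  then have ma: "m * (1 - a) \<le> m - 1" using m0 by (simp add: field_simps)
  have d: "0 \<le> d" "d \<le> a - m / 2" using a mm m0 by (auto simp: d_def field_simps)
  have "m * (m - a) \<le> m * (m - 1 / m)" using a m0 by (intro mult_left_mono) auto
  then have "m * (m - a) * d\<^sup>2 \<le> d\<^sup>2"
    using mm m0 a m by (intro mult_left_le_one_le) (auto simp: field_simps)
  also have "\<dots> \<le> (a - m / 2)\<^sup>2" using d by (intro power_mono) auto
  also have "\<dots> \<le> (m - a)\<^sup>2 - m * (1 - a)"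
  proof -
    have "0 \<le> (3 * m / 4 - 1) * m" using m by simp
    then show ?thesis by (simp add: power2_eq_square algebra_simps)
  qed
  finally have key: "m * (1 - a) \<le> (m - a)\<^sup>2 - m * (m - a) * d\<^sup>2" by simp
  have "(m - a) * (m - a - m * d\<^sup>2) = (m - a)\<^sup>2 - m * (m - a) * d\<^sup>2"
    by (simp add: power2_eq_square algebra_simps)
  moreover have "0 < m * (1 - a)" using a m0 by simp
  ultimately have "0 < (m - a) * (m - a - m * d\<^sup>2)" using key by linarith
  then have nonneg: "0 \<le> (m - a) - m * d\<^sup>2 / 2"
    using a m by (simp add: zero_less_mult_iff)
  have "((m - a) - m * d\<^sup>2 / 2)\<^sup>2 = (m - a)\<^sup>2 - m * (m - a) * d\<^sup>2 + (m * d\<^sup>2 / 2)\<^sup>2"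
    by (simp add: power2_eq_square algebra_simps)
  then have "m * (1 - a) \<le> ((m - a) - m * d\<^sup>2 / 2)\<^sup>2"
    using key zero_le_power2[of "m * d\<^sup>2 / 2"] by linarith
  then have "balanced_mass m a \<le> (m - a) - m * d\<^sup>2 / 2"
    using nonneg ma m by (simp add: balanced_mass_eq_sqrt real_le_lsqrt)
  then have "balanced_mass m a / m \<le> ((m - a) - m * d\<^sup>2 / 2) / m"
    using m0 by (simp add: divide_right_mono)
  also have "\<dots> = 1 - a / m - d\<^sup>2 / 2" using m0 by (simp add: field_simps)
  finally show ?thesis unfolding d_def by linarith
qed

lemma overlap_payment_le_large_mass:
  assumes m: "4/3 \<le> m" "m \<le> 27/20" and a: "a < 1"
    and k: "1 < k" "k\<^sup>2 = m * (k - b)" and overlap: "1 - b \<le> a"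
  shows "(a * (k - b) + (a - (1 - b))\<^sup>2 / 2) / k\<^sup>2 \<le> 1 - balanced_mass m a / m"
proof -
  have m0: "0 < m" using m by simp
  have b: "k - b = k\<^sup>2 / m" using k m0 by (simp add: field_simps)
  have "m * (1 - b) - 1 = (k - 1) * (k + 1 - m)"
  proof -
    have "b = k - k\<^sup>2 / m" using b by linarith
    then show ?thesis using m0 by (simp add: field_simps power2_eq_square)
  qed
  moreover have "0 \<le> (k - 1) * (k + 1 - m)" using k m by simp
  ultimately have large_stake: "1 / m \<le> 1 - b" using m0 by (simp add: field_simps)
  have "1 \<le> k\<^sup>2" using k(1) by (simp add: less_imp_le)
  then have "(a - (1 - b))\<^sup>2 / k\<^sup>2 \<le> (a - (1 - b))\<^sup>2"
    using divide_left_mono[of 1 "k\<^sup>2" "(a - (1 - b))\<^sup>2"] by fastforce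
  also have "\<dots> \<le> (a - 1 / m)\<^sup>2" using overlap large_stake by (intro power_mono) auto
  finally have "(a - (1 - b))\<^sup>2 / k\<^sup>2 \<le> (a - 1 / m)\<^sup>2" .
  moreover have "a * (k - b) / k\<^sup>2 = a / m" using k(1) m0 by (simp add: b)
  ultimately have "(a * (k - b) + (a - (1 - b))\<^sup>2 / 2) / k\<^sup>2 \<le> a / m + (a - 1 / m)\<^sup>2 / 2"
    by (simp add: add_divide_distrib)
  also have "\<dots> \<le> 1 - balanced_mass m a / m"
    using large_stake overlap a m by (intro own_payment_ge_large_stake) auto
  finally show ?thesis .
qed

lemma pivot_area_behind_disjoint: "a < 1 - b \<Longrightarrow> pivot_area_behind 1 a b = a * (1 - b) - a\<^sup>2 / 2"
  by (simp add: pivot_area_behind_def power2_eq_square field_simps)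

lemma pivot_area_behind_overlap: "1 - b \<le> a \<Longrightarrow> pivot_area_behind 1 a b = (1 - b)\<^sup>2 / 2"
  by (simp add: pivot_area_behind_def)

lemma pivot_area_behind_le:
  assumes "0 < a" "b < 1"
  shows "pivot_area_behind 1 a b \<le> a * (1 - b)"
proof (cases "a < 1 - b")
  case False
  then have "(1 - b) * (1 - b) \<le> a * (1 - b)" using assms by (intro mult_right_mono) auto
  moreover have "0 \<le> a * (1 - b)" using assms by simp
  ultimately show ?thesis using False by (simp add: pivot_area_behind_overlap power2_eq_square)
qed (simp add: pivot_area_behind_disjoint)

lemma pivot_area_ahead_small_mass:
  "1 - a < k \<Longrightarrow> k \<le> 1 \<Longrightarrow> pivot_area_ahead 1 a k = (k - (1 - a))\<^sup>2 / 2"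
  by (simp add: pivot_area_ahead_def min_def power2_eq_square field_simps)

lemma pivot_area_ahead_large_mass: "0 < a \<Longrightarrow> 1 < k \<Longrightarrow> pivot_area_ahead 1 a k = a * (k - (2 - a) / 2)"
  by (simp add: pivot_area_ahead_def min_def)

lemma own_payment_ge:
  assumes "4/3 \<le> m" "0 < a" "a < 1"
  shows "a / m \<le> 1 - balanced_mass m a / m"
  using balanced_mass_add_le[OF assms] assms by (simp add: field_simps)

lemma pair_payment_le_small_mass:
  assumes m: "4/3 \<le> m" "m \<le> 27/20" and a: "0 < a" "a < 1" and b: "b < 1"
    and k: "0 < k" "k \<le> 1" "k\<^sup>2 = m * (1 - b)"
  shows "(pivot_area_ahead 1 a k + pivot_area_behind 1 a b) / k\<^sup>2 \<le> 1 - balanced_mass m a / m"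
proof (cases "1 - a < k \<and> 1 - b \<le> a")
  case True
  have "(pivot_area_ahead 1 a k + pivot_area_behind 1 a b) / k\<^sup>2
      = ((k - (1 - a))\<^sup>2 + (1 - b)\<^sup>2) / (2 * k\<^sup>2)"
    using True k
    by (simp add: pivot_area_ahead_small_mass pivot_area_behind_overlap add_divide_distrib)
  then show ?thesis using True overlap_payment_le_small_mass[OF m a(2) k] by simp
next
  case False
  have "pivot_area_ahead 1 a k + pivot_area_behind 1 a b \<le> a * (1 - b)"
  proof (cases "k \<le> 1 - a")
    case True
    then show ?thesis using pivot_area_behind_le[OF a(1) b] k
      by (simp add: pivot_area_ahead_def min_def)
  next
    case k_gt: False
    have "(k - (1 - a))\<^sup>2 \<le> a\<^sup>2" using k_gt k by (intro power_mono) auto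
    then show ?thesis using False k_gt k
      by (simp add: pivot_area_ahead_small_mass pivot_area_behind_disjoint)
  qed
  then have "(pivot_area_ahead 1 a k + pivot_area_behind 1 a b) / k\<^sup>2 \<le> a * (1 - b) / k\<^sup>2"
    by (simp add: divide_right_mono)
  also have "\<dots> = a / m" unfolding k(3) using b m by simp
  also have "\<dots> \<le> 1 - balanced_mass m a / m" using m a by (intro own_payment_ge) auto
  finally show ?thesis .
qed

lemma pair_payment_le_large_mass:
  assumes m: "4/3 \<le> m" "m \<le> 27/20" and a: "0 < a" "a < 1"
    and k: "1 < k" "k\<^sup>2 = m * (k - b)"
  shows "(pivot_area_ahead 1 a k + pivot_area_behind 1 a b) / k\<^sup>2 \<le> 1 - balanced_mass m a / m"
proof -
  have ahead: "pivot_area_ahead 1 a k = a * (k - (2 - a) / 2)"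
    using k a by (simp add: pivot_area_ahead_large_mass)
  show ?thesis
  proof (cases "1 - b \<le> a")
    case True
    have "pivot_area_ahead 1 a k + pivot_area_behind 1 a b = a * (k - b) + (a - (1 - b))\<^sup>2 / 2"
      using True by (simp add: ahead pivot_area_behind_overlap power2_eq_square field_simps)
    then show ?thesis using overlap_payment_le_large_mass[OF m a(2) k True] by simp
  next
    case False
    have "pivot_area_ahead 1 a k + pivot_area_behind 1 a b = a * (k - b)"
      using False by (simp add: ahead pivot_area_behind_disjoint power2_eq_square field_simps)
    moreover have "k - b \<noteq> 0" using k by auto
    ultimately have "(pivot_area_ahead 1 a k + pivot_area_behind 1 a b) / k\<^sup>2 = a / m"
      using m by (simp add: k(2))
    then show ?thesis using own_payment_ge[of m a] m a by simp
  qed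
qed

lemma pair_payment_le_own_payment:
  assumes m: "4/3 \<le> m" "m \<le> 27/20" and a: "0 < a" "a < 1" and b: "0 < b" "b < 1"
  shows "(pivot_area_ahead 1 a (balanced_mass m b) + pivot_area_behind 1 a b) / (balanced_mass m b)\<^sup>2
    \<le> 1 - balanced_mass m a / m"
proof -
  have "1 \<le> m" using m by simp
  then show ?thesis using b
  proof (cases rule: balanced_mass_cases)
    case small
    then show ?thesis using pair_payment_le_small_mass[OF m a b(2)] by simp
  next
    case large
    then show ?thesis using pair_payment_le_large_mass[OF m a] by simp
  qed
qed

section \<open>The balanced equilibrium\<close>

lemma sum_stake_partition:
  assumes "is_partition n L Ps"
  shows "(\<Sum>j<length Ps. stake a (Ps ! j)) = L + (\<Sum>i\<in>{1..n}. a i)"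
proof -
  have fin: "finite (fst (Ps ! j))" if "j < length Ps" for j
    using assms that unfolding is_partition_def by (meson finite_atLeastAtMost finite_subset)
  have "(\<Sum>j<length Ps. stake a (Ps ! j))
      = (\<Sum>j<length Ps. snd (Ps ! j)) + (\<Sum>j<length Ps. \<Sum>i\<in>fst (Ps ! j). a i)"
    by (simp add: stake_def sum.distrib)
  also have "(\<Sum>j<length Ps. \<Sum>i\<in>fst (Ps ! j). a i) = (\<Sum>i\<in>(\<Union>j<length Ps. fst (Ps ! j)). a i)"
    using fin assms by (intro sum.UNION_disjoint[symmetric]) (auto simp: is_partition_def)
  finally show ?thesis using assms by (simp add: is_partition_def)
qed

lemma OPT_mult_le_total_stake:
  assumes h: "0 < h" and Ps0: "is_partition n L Ps0" "\<forall>P\<in>set Ps0. h \<le> stake a P"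
  shows "real (OPT h n a L) * h \<le> L + (\<Sum>i\<in>{1..n}. a i)"
proof -
  define T where "T = {t. \<exists>Ps. is_partition n L Ps \<and> length Ps = t \<and> (\<forall>P\<in>set Ps. h \<le> stake a P)}"
  have bound: "real t * h \<le> L + (\<Sum>i\<in>{1..n}. a i)" if "t \<in> T" for t
  proof -
    obtain Ps where Ps: "is_partition n L Ps" "length Ps = t" "\<forall>P\<in>set Ps. h \<le> stake a P"
      using \<open>t \<in> T\<close> unfolding T_def by blast
    have "real (card {..<length Ps}) * h \<le> (\<Sum>j<length Ps. stake a (Ps ! j))"
      using Ps(3) by (intro sum_bounded_below) simp
    then show ?thesis using sum_stake_partition[OF Ps(1), of a] Ps(2) by simp
  qed
  have "T \<subseteq> {..nat \<lceil>(L + (\<Sum>i\<in>{1..n}. a i)) / h\<rceil>}"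
  proof
    fix t assume "t \<in> T"
    then have "real t \<le> (L + (\<Sum>i\<in>{1..n}. a i)) / h" using bound h by (simp add: field_simps)
    then have "real t \<le> of_int \<lceil>(L + (\<Sum>i\<in>{1..n}. a i)) / h\<rceil>"
      using le_of_int_ceiling order_trans by blast
    then have "int t \<le> \<lceil>(L + (\<Sum>i\<in>{1..n}. a i)) / h\<rceil>" by linarith
    then show "t \<in> {..nat \<lceil>(L + (\<Sum>i\<in>{1..n}. a i)) / h\<rceil>}" by simp
  qed
  then have "finite T" by (rule finite_subset) simp
  moreover have "length Ps0 \<in> T" unfolding T_def using Ps0 by auto
  ultimately have "OPT h n a L \<in> T" unfolding OPT_def T_def[symmetric] by (intro Max_in) auto
  then show ?thesis by (rule bound)
qed

lemma price_of_stability_le: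
  assumes "shapley_NE h n a L Ps"
  shows "price_of_stability h n a L \<le> real (OPT h n a L) / real (num_winning h a Ps)"
  unfolding price_of_stability_def
proof (rule cInf_lower)
  show "bdd_below {real (OPT h n a L) / real (num_winning h a Ps) |Ps. shapley_NE h n a L Ps}"
    by (rule bdd_belowI[of _ 0]) auto
qed (use assms in auto)

definition balanced_pool :: "real \<Rightarrow> (nat \<Rightarrow> real) \<Rightarrow> nat \<Rightarrow> real \<Rightarrow> nat \<Rightarrow> pool" where
  "balanced_pool h a n m j =
     (if j < n then ({j + 1}, h * balanced_mass m (a (j + 1) / h)) else ({}, h * m))"

definition balanced_partition :: "real \<Rightarrow> (nat \<Rightarrow> real) \<Rightarrow> nat \<Rightarrow> real \<Rightarrow> nat \<Rightarrow> pool list" where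
  "balanced_partition h a n m t = map (balanced_pool h a n m) [0..<n + t]"

lemma nth_balanced_partition:
  "j < n + t \<Longrightarrow> balanced_partition h a n m t ! j = balanced_pool h a n m j"
  by (simp add: balanced_partition_def)

lemma length_balanced_partition: "length (balanced_partition h a n m t) = n + t"
  by (simp add: balanced_partition_def)

context
  fixes h m L :: real and n t :: nat and a :: "nat \<Rightarrow> real"
  assumes h: "0 < h" and m: "4/3 \<le> m" "m \<le> 27/20"
    and stakes: "\<forall>i\<in>{1..n}. 0 < a i \<and> a i < h"
    and L: "L = h * (real t * m + (\<Sum>p<n. balanced_mass m (a (p + 1) / h)))"
begin

private lemma stake_normalized: "j < n \<Longrightarrow> 0 < a (j + 1) / h \<and> a (j + 1) / h < 1"
  using stakes h by (auto simp: field_simps)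

lemma stake_balanced_pool:
  "h \<le> stake a (balanced_pool h a n m j) \<and> stake a (balanced_pool h a n m j) \<le> h * m"
proof (cases "j < n")
  case True
  define x where "x = a (j + 1) / h"
  have x: "0 < x" "x < 1" using stake_normalized[OF True] by (simp_all add: x_def)
  have "1 \<le> balanced_mass m x + x" "balanced_mass m x + x \<le> m"
    using m x by (auto intro: one_le_balanced_mass_add balanced_mass_add_le)
  moreover have "stake a (balanced_pool h a n m j) = h * (balanced_mass m x + x)"
    using True h by (simp add: balanced_pool_def stake_def x_def algebra_simps)
  ultimately show ?thesis using h by simp
qed (use h m in \<open>simp add: balanced_pool_def stake_def\<close>)

lemma nonatomic_unit_balanced_pool: "nonatomic_unit h a (balanced_pool h a n m j) = 1 / (h * m)"
proof -
  have reward: "pool_reward h a (balanced_pool h a n m j) = 1"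
    using stake_balanced_pool by (simp add: pool_reward_def)
  show ?thesis
  proof (cases "j < n")
    case True
    define c where "c = balanced_mass m (a (j + 1) / h)"
    have "0 < c" using stake_normalized[OF True] m by (simp add: c_def balanced_mass_pos)
    have "ocean_shapley h a ({j + 1}, h * c) (j + 1) = 1 - c / m"
      using True stakes h m by (simp add: c_def ocean_shapley_balanced_own)
    then have "nonatomic_unit h a (balanced_pool h a n m j) = (1 - (1 - c / m)) / (h * c)"
      using True reward by (simp add: nonatomic_unit_def balanced_pool_def c_def)
    also have "\<dots> = 1 / (h * m)" using \<open>0 < c\<close> h m by (simp add: field_simps)
    finally show ?thesis .
  qed (use reward in \<open>simp add: nonatomic_unit_def balanced_pool_def\<close>)
qed

lemma is_partition_balanced_partition: "is_partition n L (balanced_partition h a n m t)"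
proof -
  have pos: "fst (balanced_pool h a n m j) = {} \<Longrightarrow> 0 < snd (balanced_pool h a n m j)" for j
    using h m by (simp add: balanced_pool_def split: if_splits)
  have nonneg: "0 \<le> snd (balanced_pool h a n m j)" for j
    using stake_normalized[of j] h m balanced_mass_pos[of m "a (j + 1) / h"]
    by (simp add: balanced_pool_def less_imp_le)
  have mass: "(\<Sum>j<n + t'. snd (balanced_pool h a n m j))
      = (\<Sum>p<n. h * balanced_mass m (a (p + 1) / h)) + real t' * (h * m)" for t'
    by (induction t') (simp_all add: balanced_pool_def algebra_simps)
  have "(\<Union>j<n + t. fst (balanced_pool h a n m j)) = {1..n}"
  proof (intro equalityI subsetI)
    fix i assume "i \<in> {1..n}"
    then have "i - 1 < n + t" "i \<in> fst (balanced_pool h a n m (i - 1))"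
      by (auto simp: balanced_pool_def)
    then show "i \<in> (\<Union>j<n + t. fst (balanced_pool h a n m j))" by blast
  qed (auto simp: balanced_pool_def split: if_splits)
  moreover have "fst (balanced_pool h a n m i) \<inter> fst (balanced_pool h a n m j) = {}"
    if "i \<noteq> j" for i j
    using that by (simp add: balanced_pool_def)
  moreover have "fst (balanced_pool h a n m j) \<subseteq> {1..n}" for j
    by (simp add: balanced_pool_def)
  ultimately show ?thesis
    unfolding is_partition_def length_balanced_partition
    using pos nonneg mass[of t]
    by (simp add: L nth_balanced_partition sum_distrib_left algebra_simps)
qed

lemma balanced_pool_no_deviation:
  assumes p: "p < n" and q: "q < n + t" "q \<noteq> p"
  shows "ocean_shapley h a (insert (p + 1) (fst (balanced_pool h a n m q)),
      snd (balanced_pool h a n m q)) (p + 1)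
    \<le> ocean_shapley h a (balanced_pool h a n m p) (p + 1)"
proof -
  define x where "x = a (p + 1) / h"
  have x: "0 < x" "x < 1" using stake_normalized[OF p] by (simp_all add: x_def)
  have own: "ocean_shapley h a (balanced_pool h a n m p) (p + 1) = 1 - balanced_mass m x / m"
    using p stakes h m by (simp add: balanced_pool_def x_def ocean_shapley_balanced_own)
  show ?thesis
  proof (cases "q < n")
    case True
    have "ocean_shapley h a ({p + 1, q + 1}, h * balanced_mass m (a (q + 1) / h)) (p + 1)
        = (pivot_area_ahead 1 x (balanced_mass m (a (q + 1) / h))
            + pivot_area_behind 1 x (a (q + 1) / h)) / (balanced_mass m (a (q + 1) / h))\<^sup>2"
      using p q True stakes h m unfolding x_def by (intro ocean_shapley_balanced_pair) auto
    also have "\<dots> \<le> 1 - balanced_mass m x / m"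
      using stake_normalized[OF True] x m by (intro pair_payment_le_own_payment) auto
    moreover have "balanced_pool h a n m q = ({q + 1}, h * balanced_mass m (a (q + 1) / h))"
      using True by (simp add: balanced_pool_def)
    ultimately show ?thesis by (simp only: own fst_conv snd_conv)
  next
    case False
    have "ocean_shapley h a ({p + 1}, h * m) (p + 1) = x / m"
      using p stakes h m by (simp add: x_def ocean_shapley_nonatomic_pool)
    also have "\<dots> \<le> 1 - balanced_mass m x / m" using x m by (intro own_payment_ge) auto
    moreover have "balanced_pool h a n m q = ({}, h * m)"
      using False by (simp add: balanced_pool_def)
    ultimately show ?thesis by (simp only: own fst_conv snd_conv)
  qed
qed

lemma shapley_NE_balanced_partition: "shapley_NE h n a L (balanced_partition h a n m t)"
  unfolding shapley_NE_def length_balanced_partition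
proof (intro conjI allI impI ballI is_partition_balanced_partition)
  fix p assume "p < n + t"
  then show "winning h a (balanced_partition h a n m t ! p)"
    using stake_balanced_pool by (simp add: nth_balanced_partition winning_def)
next
  fix p q assume "p < n + t" "0 < snd (balanced_partition h a n m t ! p)" "q < n + t" "q \<noteq> p"
  then show "nonatomic_unit h a (balanced_partition h a n m t ! q)
      \<le> nonatomic_unit h a (balanced_partition h a n m t ! p)"
    by (simp add: nth_balanced_partition nonatomic_unit_balanced_pool)
next
  fix p i q assume p: "p < n + t" "i \<in> fst (balanced_partition h a n m t ! p)"
    and q: "q < n + t" "q \<noteq> p"
  then have "p < n" and "i = p + 1"
    by (auto simp: nth_balanced_partition balanced_pool_def split: if_splits)
  then show "ocean_shapley h a (insert i (fst (balanced_partition h a n m t ! q)),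
      snd (balanced_partition h a n m t ! q)) i
      \<le> ocean_shapley h a (balanced_partition h a n m t ! p) i"
    using balanced_pool_no_deviation[OF _ q] p q by (simp add: nth_balanced_partition)
next
  fix p i assume p: "p < n + t" and i: "i \<in> fst (balanced_partition h a n m t ! p)"
  then have pn: "p < n" and i_eq: "i = p + 1"
    by (auto simp: nth_balanced_partition balanced_pool_def split: if_splits)
  define x where "x = a (p + 1) / h"
  have x: "0 < x" "x < 1" using stake_normalized[OF pn] by (simp_all add: x_def)
  have "0 \<le> x / m" using x m by simp
  also have "\<dots> \<le> 1 - balanced_mass m x / m" using x m by (intro own_payment_ge) auto
  also have "\<dots> = ocean_shapley h a (balanced_partition h a n m t ! p) i"
    using p pn stakes h m
    by (simp add: i_eq x_def nth_balanced_partition balanced_pool_def ocean_shapley_balanced_own)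
  finally show "ocean_shapley h a ({i}, 0) i
      \<le> ocean_shapley h a (balanced_partition h a n m t ! p) i"
    using pn stakes h by (simp add: i_eq ocean_shapley_alone)
qed

lemma price_of_stability_balanced_partition: "price_of_stability h n a L \<le> m"
proof -
  let ?Ps = "balanced_partition h a n m t"
  have all_winning: "\<forall>P\<in>set ?Ps. h \<le> stake a P"
    using stake_balanced_pool by (auto simp: balanced_partition_def)
  have "real (OPT h n a L) * h \<le> L + (\<Sum>i\<in>{1..n}. a i)"
    using OPT_mult_le_total_stake[OF h is_partition_balanced_partition all_winning] .
  also have "\<dots> = (\<Sum>j<n + t. stake a (?Ps ! j))"
    using sum_stake_partition[OF is_partition_balanced_partition]
    by (simp add: length_balanced_partition)
  also have "\<dots> \<le> (\<Sum>j<n + t. h * m)"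
    using stake_balanced_pool by (intro sum_mono) (simp add: nth_balanced_partition)
  finally have opt: "real (OPT h n a L) \<le> m * real (n + t)" using h by (simp add: mult.commute)
  have "num_winning h a ?Ps = n + t"
    using all_winning
    by (simp add: num_winning_def winning_def filter_id_conv length_balanced_partition)
  with price_of_stability_le[OF shapley_NE_balanced_partition]
  have "price_of_stability h n a L \<le> real (OPT h n a L) / real (n + t)" by simp
  also have "\<dots> \<le> m"
    using opt m by (cases "n + t = 0") (auto simp: field_simps)
  finally show ?thesis .
qed

end

lemma sum_balanced_mass_bounds:
  assumes m: "4/3 \<le> m" and x: "\<forall>p<n. 0 < x p \<and> x p < 1"
  shows "0 \<le> (\<Sum>p<n. balanced_mass m (x p))" "(\<Sum>p<n. balanced_mass m (x p)) \<le> real n * m"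
proof -
  have bounds: "0 < balanced_mass m (x p) \<and> balanced_mass m (x p) \<le> m" if "p < n" for p
    using that m x balanced_mass_pos[of m "x p"] balanced_mass_add_le[of m "x p"] by auto
  then show "0 \<le> (\<Sum>p<n. balanced_mass m (x p))" by (intro sum_nonneg) (simp add: less_imp_le)
  show "(\<Sum>p<n. balanced_mass m (x p)) \<le> real n * m"
    using sum_mono[of "{..<n}" "\<lambda>p. balanced_mass m (x p)" "\<lambda>_. m"] bounds by simp
qed

lemma exists_balancing_ratio:
  fixes x :: "nat \<Rightarrow> real"
  assumes h: "0 < h" and M: "4/3 < M" "M \<le> 2" and x: "\<forall>p<n. 0 < x p \<and> x p < 1"
    and L: "h * (real n + 1) * (4/3) \<le> L * (1 - 4 / (3 * M))"
  shows "\<exists>m t. 4/3 \<le> m \<and> m \<le> M \<and> L = h * (real t * m + (\<Sum>p<n. balanced_mass m (x p)))"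
proof -
  define t where "t = nat \<lceil>L / (h * M)\<rceil>"
  define F where "F m = h * (real t * m + (\<Sum>p<n. balanced_mass m (x p)))" for m
  have hM: "0 < h * M" using h M by simp
  have "0 < h * (real n + 1) * (4/3)" using h by simp
  then have "0 < L * (1 - 4 / (3 * M))" using L by linarith
  moreover have "0 < 1 - 4 / (3 * M)" using M by (simp add: field_simps)
  ultimately have "0 < L" by (simp add: zero_less_mult_iff)
  then have t: "L / (h * M) \<le> real t" "real t \<le> L / (h * M) + 1"
    using hM by (simp_all add: t_def)
  have "continuous_on {4/3..M} F"
    unfolding F_def using M
    by (intro continuous_intros continuous_on_sum
        continuous_on_subset[OF continuous_on_balanced_mass]) auto
  moreover have "F (4/3) \<le> L"
  proof -
    have "F (4/3) \<le> h * (real t * (4/3) + real n * (4/3))"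
      unfolding F_def using h sum_balanced_mass_bounds(2)[of "4/3" n x] x by simp
    also have "\<dots> \<le> h * ((L / (h * M) + 1) * (4/3) + real n * (4/3))"
      using t h by (intro mult_left_mono add_right_mono mult_right_mono) auto
    also have "\<dots> = L * (4 / (3 * M)) + h * (real n + 1) * (4/3)"
      using h M by (simp add: field_simps)
    also have "\<dots> \<le> L" using L by (simp add: algebra_simps)
    finally show ?thesis .
  qed
  moreover have "L \<le> F M"
  proof -
    have "0 \<le> h * (\<Sum>p<n. balanced_mass M (x p))"
      using h sum_balanced_mass_bounds(1)[of M n x] x M by simp
    moreover have "L \<le> h * (real t * M)" using t hM by (simp add: field_simps)
    ultimately show ?thesis unfolding F_def by (simp add: distrib_left)
  qed
  ultimately obtain m where "4/3 \<le> m" "m \<le> M" "F m = L"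
    using IVT'[of F "4/3" L M] M by auto
  then show ?thesis unfolding F_def by blast
qed

lemma balanced_equilibrium_exists:
  assumes h: "0 < h" and M: "4/3 < M" "M \<le> 27/20" and stakes: "\<forall>i\<in>{1..n}. 0 < a i \<and> a i < h"
    and L: "h * (real n + 1) * (4/3) \<le> L * (1 - 4 / (3 * M))"
  shows "{Ps. shapley_NE h n a L Ps} \<noteq> {} \<and> price_of_stability h n a L \<le> M"
proof -
  have "\<forall>p<n. 0 < a (p + 1) / h \<and> a (p + 1) / h < 1" using stakes h by simp
  then obtain m t where m: "4/3 \<le> m" "m \<le> M"
    and L_eq: "L = h * (real t * m + (\<Sum>p<n. balanced_mass m (a (p + 1) / h)))"
    using exists_balancing_ratio[of h M n "\<lambda>p. a (p + 1) / h" L] h M L by auto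
  then show ?thesis
    using shapley_NE_balanced_partition[OF h m(1) _ stakes L_eq]
      price_of_stability_balanced_partition[OF h m(1) _ stakes L_eq] M by auto
qed

theorem theorem3p4:
  fixes h \<epsilon> S :: real
  assumes "h > 0" and "\<epsilon> > 0"
  shows "\<exists>L0. \<forall>(n::nat) (a::nat \<Rightarrow> real).
           (\<forall>i\<in>{1..n}. h / 4 < a i \<and> a i < h) \<and> (\<Sum>i=1..n. a i) = S \<longrightarrow>
           (\<forall>L::real. L \<ge> L0 \<longrightarrow>
              {Ps. shapley_NE h n a L Ps} \<noteq> {} \<and>
              price_of_stability h n a L \<le> 4/3 + \<epsilon>)"
proof -
  define M where "M = min (27/20) (4/3 + \<epsilon>)"
  have M: "4/3 < M" "M \<le> 27/20" "M \<le> 4/3 + \<epsilon>" using assms by (auto simp: M_def min_def)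
  define D where "D = 1 - 4 / (3 * M)"
  have D: "0 < D" using M by (simp add: D_def field_simps)
  define L0 where "L0 = (4 * \<bar>S\<bar> + h) * (4/3) / D"
  show ?thesis
  proof (intro exI[of _ L0] allI impI)
    fix n :: nat and a :: "nat \<Rightarrow> real" and L :: real
    assume stakes: "(\<forall>i\<in>{1..n}. h / 4 < a i \<and> a i < h) \<and> (\<Sum>i=1..n. a i) = S" and "L0 \<le> L"
    have "real n * (h / 4) \<le> S" using stakes sum_bounded_below[of "{1..n}" "h / 4" a] by fastforce
    then have "h * (real n + 1) * (4/3) \<le> (4 * \<bar>S\<bar> + h) * (4/3)" by (simp add: algebra_simps)
    also have "\<dots> = L0 * D" using D by (simp add: L0_def)
    also have "\<dots> \<le> L * D" using \<open>L0 \<le> L\<close> D by (intro mult_right_mono) auto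
    finally have "h * (real n + 1) * (4/3) \<le> L * (1 - 4 / (3 * M))" by (simp add: D_def)
    moreover have "\<forall>i\<in>{1..n}. 0 < a i \<and> a i < h" using stakes assms by auto
    ultimately show "{Ps. shapley_NE h n a L Ps} \<noteq> {} \<and> price_of_stability h n a L \<le> 4/3 + \<epsilon>"
      using balanced_equilibrium_exists[of h M n a L] assms M by fastforce
  qed
qed

end
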